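(* Let $\mathcal{N}$ be a von Neumann algebra, $n\geqslant 2$ an integer, and $\mathcal{M}=M_n(\mathbb{C})\otimes\mathcal{N}$. If $\mathcal{N}$ contains an operator that is irreducible in $\mathcal{N}$, then there exist a projection $P\in\mathcal{M}$ and a self-adjoint operator $B\in\mathcal{M}$ such that $P+iB$ is irreducible in $\mathcal{M}$.
   Context: For a von Neumann algebra $\mathcal{M}$ with center $\mathcal{Z}(\mathcal{M})$, an operator $T\in\mathcal{M}$ is called irreducible (in $\mathcal{M}$) if $W^*(T)'\cap\mathcal{M}=\mathcal{Z}(\mathcal{M})$, where $W^*(T)$ is the von Neumann algebra generated by $T$. *)

theory Defs
  imports "HOL-Analysis.Analysis"
begin

text \<open>A complex Hilbert space is modelled as a real Hilbert space (real inner product,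
complete) equipped with a compatible complex scalar multiplication; the complex inner
product is then recovered as cinner below (linear in the second argument).\<close>

class chilbert = real_inner + complete_space +
  fixes cscale :: "complex \<Rightarrow> 'a \<Rightarrow> 'a"
  assumes cscale_of_real: "cscale (complex_of_real r) x = scaleR r x"
    and cscale_add_left: "cscale (a + b) x = cscale a x + cscale b x"
    and cscale_add_right: "cscale a (x + y) = cscale a x + cscale a y"
    and cscale_mult: "cscale (a * b) x = cscale a (cscale b x)"
    and inner_cscale_ii: "inner (cscale \<i> x) (cscale \<i> y) = inner x y"

definition cinner :: "'a::chilbert \<Rightarrow> 'a \<Rightarrow> complex" where
  "cinner x y = Complex (inner x y) (inner (cscale \<i> x) y)"

text \<open>Direct sum of finitely many copies of a complex Hilbert space, H^n = C^n \<otimes> H.\<close>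

instantiation vec :: (chilbert, finite) chilbert
begin
definition cscale_vec :: "complex \<Rightarrow> 'a ^ 'b \<Rightarrow> 'a ^ 'b" where
  "cscale_vec c x = (\<chi> i. cscale c (x $ i))"
instance
  by standard (simp_all add: cscale_vec_def vec_eq_iff scaleR_vec_def inner_vec_def
      cscale_of_real cscale_add_left cscale_add_right cscale_mult inner_cscale_ii)
end

definition cblinear :: "('a::chilbert \<Rightarrow> 'a) \<Rightarrow> bool" where
  "cblinear A \<longleftrightarrow> bounded_linear A \<and> (\<forall>c x. A (cscale c x) = cscale c (A x))"

definition adj :: "('a::chilbert \<Rightarrow> 'a) \<Rightarrow> ('a \<Rightarrow> 'a)" where
  "adj A = (SOME B. cblinear B \<and> (\<forall>x y. cinner (A x) y = cinner x (B y)))"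

definition commutant :: "('a::chilbert \<Rightarrow> 'a) set \<Rightarrow> ('a \<Rightarrow> 'a) set" where
  "commutant S = {B. cblinear B \<and> (\<forall>A\<in>S. A \<circ> B = B \<circ> A)}"

text \<open>Von Neumann algebra: a self-adjoint set of bounded operators equal to its double
commutant (equivalently, by the bicommutant theorem, a weak-operator closed unital
*-subalgebra of B(H)).\<close>

definition von_neumann_algebra :: "('a::chilbert \<Rightarrow> 'a) set \<Rightarrow> bool" where
  "von_neumann_algebra M \<longleftrightarrow>
     (\<forall>A\<in>M. cblinear A) \<and> (\<forall>A\<in>M. adj A \<in> M) \<and> commutant (commutant M) = M"

definition center :: "('a::chilbert \<Rightarrow> 'a) set \<Rightarrow> ('a \<Rightarrow> 'a) set" where
  "center M = M \<inter> commutant M"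

definition Wstar :: "('a::chilbert \<Rightarrow> 'a) \<Rightarrow> ('a \<Rightarrow> 'a) set" where
  "Wstar T = commutant (commutant {T, adj T})"

definition irreducible_in :: "('a::chilbert \<Rightarrow> 'a) set \<Rightarrow> ('a \<Rightarrow> 'a) \<Rightarrow> bool" where
  "irreducible_in M T \<longleftrightarrow> T \<in> M \<and> commutant (Wstar T) \<inter> M = center M"

definition is_projection :: "('a::chilbert \<Rightarrow> 'a) \<Rightarrow> bool" where
  "is_projection P \<longleftrightarrow> cblinear P \<and> P \<circ> P = P \<and> adj P = P"

definition self_adjoint :: "('a::chilbert \<Rightarrow> 'a) \<Rightarrow> bool" where
  "self_adjoint B \<longleftrightarrow> cblinear B \<and> adj B = B"

section \<open>M_n(C) \<otimes> N, realised as n \<times> n operator matrices with entries in N acting on H^n\<close>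

definition op_matrix :: "('n::finite \<Rightarrow> 'n \<Rightarrow> ('a::chilbert \<Rightarrow> 'a)) \<Rightarrow> ('a ^ 'n \<Rightarrow> 'a ^ 'n)" where
  "op_matrix A x = (\<chi> i. \<Sum>j\<in>UNIV. A i j (x $ j))"

definition matrix_tensor :: "('a::chilbert \<Rightarrow> 'a) set \<Rightarrow> ('a ^ 'n::finite \<Rightarrow> 'a ^ 'n) set" where
  "matrix_tensor N = {op_matrix A | A. \<forall>i j. A i j \<in> N}"

end

theory Submission
  imports Defs
begin

text \<open>An irreducible S in N splits as S = H + iK with H, K self-adjoint in N. For indices
a \<noteq> b and distinct reals d, take P = E_aa \<otimes> 1 and let B be the self-adjoint arrowhead
matrix with diagonal (H at a, K at b, d_c elsewhere) and entries 1 off the diagonal in row and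
column b. Since W*(P + iB)' is the commutant of {P, B}, it suffices to compare matrix entries:
an operator matrix commuting with P and B is diagonal with a constant entry x that commutes
with H and K, hence with S and S*. Irreducibility of S puts x in the centre of N, so the matrix
is central in M_n(N). Adjoints exist by the Riesz representation theorem, obtained from the
point of minimal norm in a closed convex set.\<close>

lemma cscale_Re_Im: "cscale c (x::'a::chilbert) = Re c *\<^sub>R x + Im c *\<^sub>R cscale \<i> x"
proof -
  have "c = complex_of_real (Re c) + complex_of_real (Im c) * \<i>"
    by (simp add: complex_eq_iff)
  then show ?thesis
    by (metis cscale_add_left cscale_mult cscale_of_real)
qed

lemma cscale_scaleR: "cscale c (r *\<^sub>R (x::'a::chilbert)) = r *\<^sub>R cscale c x"
  by (metis cscale_mult cscale_of_real mult.commute)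

lemma cscale_zero_right [simp]: "cscale c (0::'a::chilbert) = 0"
  by (metis cscale_scaleR scale_zero_left)

lemma cscale_zero_left [simp]: "cscale 0 (x::'a::chilbert) = 0"
  by (metis cscale_of_real of_real_0 scale_zero_left)

lemma cscale_one [simp]: "cscale 1 (x::'a::chilbert) = x"
  by (metis cscale_of_real of_real_1 scale_one)

lemma cscale_minus_left: "cscale (- c) (x::'a::chilbert) = - cscale c x"
  by (metis add.right_inverse add_eq_0_iff2 cscale_add_left cscale_zero_left)

lemma cscale_ii_ii: "cscale \<i> (cscale \<i> (x::'a::chilbert)) = - x"
  by (metis complex_i_mult_minus cscale_minus_left cscale_mult cscale_one)

lemma inner_cscale_ii_left: "inner (cscale \<i> x) (y::'a::chilbert) = - inner x (cscale \<i> y)"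
  by (metis cscale_ii_ii inner_cscale_ii inner_minus_left)

lemma norm_cscale_ii: "norm (cscale \<i> (x::'a::chilbert)) = norm x"
  by (simp add: norm_eq_sqrt_inner inner_cscale_ii)

lemma bounded_linear_cscale: "bounded_linear (cscale c :: 'a::chilbert \<Rightarrow> 'a)"
proof
  fix x y :: 'a and r :: real
  show "cscale c (x + y) = cscale c x + cscale c y" by (rule cscale_add_right)
  show "cscale c (r *\<^sub>R x) = r *\<^sub>R cscale c x" by (rule cscale_scaleR)
  have "norm (cscale c x) \<le> norm x * (\<bar>Re c\<bar> + \<bar>Im c\<bar>)" for x
    using norm_triangle_ineq[of "Re c *\<^sub>R x" "Im c *\<^sub>R cscale \<i> x"]
    by (simp add: cscale_Re_Im[of c x] norm_cscale_ii algebra_simps)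
  then show "\<exists>K. \<forall>x::'a. norm (cscale c x) \<le> norm x * K" by blast
qed

lemma cscale_sum: "cscale c (sum f A) = (\<Sum>x\<in>A. cscale c (f x :: 'a::chilbert))"
  by (rule linear_sum[OF bounded_linear.linear[OF bounded_linear_cscale]])

lemma inner_cscale_right: "inner u (cscale c (v::'a::chilbert)) = inner (cscale (cnj c) u) v"
  by (simp add: cscale_Re_Im[of c v] cscale_Re_Im[of "cnj c" u] inner_add_right inner_add_left
      inner_diff_left inner_cscale_ii_left)

lemma cinner_add_left: "cinner (x + y) (z::'a::chilbert) = cinner x z + cinner y z"
  by (simp add: complex_eq_iff cinner_def cscale_add_right inner_add_left)

lemma cinner_add_right: "cinner z (x + (y::'a::chilbert)) = cinner z x + cinner z y"
  by (simp add: complex_eq_iff cinner_def inner_add_right)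

lemma cinner_cscale_right: "cinner x (cscale c (y::'a::chilbert)) = c * cinner x y"
  by (simp add: cinner_def complex_eq_iff cscale_Re_Im[of c y] inner_add_right inner_cscale_ii
      inner_cscale_ii_left cscale_ii_ii)

lemma cinner_commute: "cinner y (x::'a::chilbert) = cnj (cinner x y)"
  by (simp add: cinner_def complex_eq_iff inner_commute[of x "cscale \<i> y"] inner_cscale_ii_left
      inner_commute[of x y])

lemma cinner_cscale_left: "cinner (cscale c x) (y::'a::chilbert) = cnj c * cinner x y"
  by (metis cinner_commute cinner_cscale_right complex_cnj_mult)

lemma cinner_sum_left: "cinner (sum f A) (y::'a::chilbert) = (\<Sum>i\<in>A. cinner (f i) y)"
  by (simp add: complex_eq_iff cinner_def Re_sum Im_sum cscale_sum inner_sum_left)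

lemma cinner_sum_right: "cinner y (sum f A) = (\<Sum>i\<in>A. cinner (y::'a::chilbert) (f i))"
  by (simp add: complex_eq_iff cinner_def Re_sum Im_sum inner_sum_right)

lemma cinner_vec: "cinner (x::'a::chilbert^'n) y = (\<Sum>i\<in>UNIV. cinner (x$i) (y$i))"
  by (simp add: complex_eq_iff cinner_def inner_vec_def cscale_vec_def)

lemma cinner_eq_right: "(\<And>x. cinner x u = cinner x (v::'a::chilbert)) \<Longrightarrow> u = v"
  by (metis cinner_def complex.sel(1) inner_diff_right inner_eq_zero_iff right_minus_eq)

section \<open>Riesz representation\<close>

lemma minimizing_sequence_Cauchy:
  fixes u :: "nat \<Rightarrow> 'a::real_inner"
  assumes "convex S" and u_mem: "\<And>n. u n \<in> S" and d_le: "\<And>x. x \<in> S \<Longrightarrow> d \<le> norm x"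
    and "d \<ge> 0" and u_norm: "\<And>n. norm (u n) ^ 2 < d\<^sup>2 + 1 / (real n + 1)"
  shows "Cauchy u"
proof (rule metric_CauchyI)
  have dist_u: "norm (u m - u n) ^ 2 < 2 / (real m + 1) + 2 / (real n + 1)" for m n
  proof -
    have "(1/2) *\<^sub>R (u m + u n) \<in> S"
      using convexD[OF \<open>convex S\<close> u_mem u_mem, of "1/2" "1/2"] by (simp add: scaleR_right_distrib)
    then have "d\<^sup>2 \<le> norm ((1/2) *\<^sub>R (u m + u n)) ^ 2"
      using d_le \<open>d \<ge> 0\<close> power_mono by blast
    then have "4 * d\<^sup>2 \<le> norm (u m + u n) ^ 2" by (simp add: power2_eq_square)
    moreover have "norm (u m - u n) ^ 2
        = 2 * norm (u m) ^ 2 + 2 * norm (u n) ^ 2 - norm (u m + u n) ^ 2"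
      by (simp add: power2_norm_eq_inner inner_add_left inner_add_right inner_diff_left
          inner_diff_right inner_commute)
    ultimately show ?thesis using u_norm[of m] u_norm[of n] by linarith
  qed
  fix e :: real assume "e > 0"
  obtain M :: nat where M: "4 / e\<^sup>2 < real M" using reals_Archimedean2 by blast
  have small: "2 / (real n + 1) < e\<^sup>2 / 2" if "n \<ge> M" for n
  proof -
    have "4 / e\<^sup>2 < real n + 1" using M that by linarith
    then show ?thesis using \<open>e > 0\<close> by (simp add: field_simps)
  qed
  have "dist (u m) (u n) < e" if "m \<ge> M" "n \<ge> M" for m n
  proof -
    have "norm (u m - u n) ^ 2 < e\<^sup>2"
      using dist_u[of m n] small[OF that(1)] small[OF that(2)] by linarith
    then show ?thesis using \<open>e > 0\<close> by (simp add: dist_norm power_less_imp_less_base)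
  qed
  then show "\<exists>M. \<forall>m\<ge>M. \<forall>n\<ge>M. dist (u m) (u n) < e" by blast
qed

lemma exists_min_norm_point:
  fixes S :: "'a::{real_inner,complete_space} set"
  assumes "closed S" "convex S" "S \<noteq> {}"
  obtains w where "w \<in> S" "\<And>x. x \<in> S \<Longrightarrow> norm w \<le> norm x"
proof -
  define d where "d = Inf (norm ` S)"
  have bdd: "bdd_below (norm ` S)" by (rule bdd_belowI[of _ 0]) auto
  have d_le: "d \<le> norm x" if "x \<in> S" for x
    unfolding d_def using bdd that by (simp add: cInf_lower)
  have d_nonneg: "d \<ge> 0" unfolding d_def using assms(3) by (intro cInf_greatest) auto
  have "\<exists>x\<in>S. norm x ^ 2 < d\<^sup>2 + 1 / (real n + 1)" for n :: nat
  proof -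
    have "Inf (norm ` S) < sqrt (d\<^sup>2 + 1 / (real n + 1))"
      unfolding d_def[symmetric] by (rule real_less_rsqrt) simp
    then obtain x where "x \<in> S" "norm x < sqrt (d\<^sup>2 + 1 / (real n + 1))"
      using cInf_lessD[of "norm ` S"] assms(3) by auto
    then show ?thesis using real_sqrt_less_iff[of "norm x ^ 2"] by auto
  qed
  then obtain u where u: "\<And>n. u n \<in> S" "\<And>n. norm (u n) ^ 2 < d\<^sup>2 + 1 / (real n + 1)"
    by metis
  then have "Cauchy u"
    using minimizing_sequence_Cauchy[OF \<open>convex S\<close> _ d_le d_nonneg] by blast
  then obtain w where lim: "u \<longlonglongrightarrow> w" using convergent_eq_Cauchy by blast
  have "w \<in> S" using closed_sequentially[OF assms(1) u(1) lim] .
  moreover have "norm w ^ 2 \<le> d\<^sup>2"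
  proof (rule LIMSEQ_le)
    show "(\<lambda>n. norm (u n) ^ 2) \<longlonglongrightarrow> norm w ^ 2"
      by (intro tendsto_intros lim)
    show "(\<lambda>n. d\<^sup>2 + 1 / (real n + 1)) \<longlonglongrightarrow> d\<^sup>2"
      using LIMSEQ_inverse_real_of_nat_add[of "d\<^sup>2"] by (simp add: inverse_eq_divide add.commute)
  qed (use u(2) less_imp_le in blast)
  then have "norm w \<le> d" using d_nonneg by (simp add: power2_le_iff_abs_le)
  ultimately show ?thesis using that d_le by force
qed

lemma riesz_representation:
  fixes f :: "'a::{real_inner,complete_space} \<Rightarrow> real"
  assumes "bounded_linear f"
  obtains z where "\<And>x. f x = inner x z"
proof (cases "\<forall>x. f x = 0")
  case True
  then show ?thesis using that[of 0] by simp
next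
  case False
  interpret f: bounded_linear f by fact
  obtain x0 where "f x0 \<noteq> 0" using False by blast
  define S where "S = {x. f x = 1}"
  have "x0 /\<^sub>R f x0 \<in> S" unfolding S_def using \<open>f x0 \<noteq> 0\<close> by (simp add: f.scale)
  moreover have "closed S"
    unfolding S_def by (intro closed_Collect_eq continuous_intros f.continuous_on)
  moreover have "convex S"
    unfolding S_def convex_def by (auto simp: f.add f.scale algebra_simps)
  ultimately obtain w where "w \<in> S" and w_min: "\<And>x. x \<in> S \<Longrightarrow> norm w \<le> norm x"
    using exists_min_norm_point by blast
  then have fw: "f w = 1" unfolding S_def by simp
  have orth: "inner w k = 0" if "f k = 0" for k
  proof -
    have "inner (0 - w) ((w + t *\<^sub>R k) - w) \<le> 0" for t
    proof (rule any_closest_point_dot[OF \<open>convex S\<close> \<open>closed S\<close> \<open>w \<in> S\<close>])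
      show "w + t *\<^sub>R k \<in> S" unfolding S_def using fw that by (simp add: f.add f.scale)
    qed (use w_min in \<open>simp add: dist_norm\<close>)
    from this[of 1] this[of "-1"] show ?thesis by simp
  qed
  have "inner w w \<noteq> 0" using fw by auto
  have "f x = inner x ((1 / inner w w) *\<^sub>R w)" for x
  proof -
    have "inner w (x - f x *\<^sub>R w) = 0" using fw by (intro orth) (simp add: f.diff f.scale)
    then show ?thesis
      using \<open>inner w w \<noteq> 0\<close> by (simp add: inner_diff_right inner_commute field_simps)
  qed
  then show ?thesis by (rule that)
qed

lemma cblinear_linear: "cblinear A \<Longrightarrow> linear A"
  unfolding cblinear_def using bounded_linear.linear by blast

lemma cblinear_cscale_commute: "cblinear A \<Longrightarrow> A (cscale c x) = cscale c (A x)"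
  unfolding cblinear_def by blast

lemma cblinear_add: "cblinear A \<Longrightarrow> cblinear B \<Longrightarrow> cblinear (\<lambda>v. A v + B v)"
  unfolding cblinear_def by (auto intro: bounded_linear_add simp: cscale_add_right)

lemma cblinear_cscale: "cblinear A \<Longrightarrow> cblinear (\<lambda>v. cscale c (A v))"
  unfolding cblinear_def
  by (auto intro: bounded_linear_compose[OF bounded_linear_cscale] simp flip: cscale_mult
      simp: mult.commute)

lemma cblinear_id: "cblinear (\<lambda>v. v)"
  unfolding cblinear_def by (simp add: bounded_linear_ident)

lemma cblinear_zero: "cblinear (\<lambda>v. 0)"
  unfolding cblinear_def by (simp add: bounded_linear_zero)

definition has_adjoint :: "('a::chilbert \<Rightarrow> 'a) \<Rightarrow> ('a \<Rightarrow> 'a) \<Rightarrow> bool" where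
  "has_adjoint A B \<longleftrightarrow> cblinear B \<and> (\<forall>x y. cinner (A x) y = cinner x (B y))"

lemma has_adjoint_unique: "has_adjoint A B \<Longrightarrow> has_adjoint A C \<Longrightarrow> B = C"
  unfolding has_adjoint_def by (intro ext cinner_eq_right) metis

lemma adj_eqI:
  assumes "has_adjoint A B"
  shows "adj A = B"
proof -
  have "has_adjoint A (adj A)"
    unfolding adj_def has_adjoint_def[symmetric] using assms by (rule someI[of "has_adjoint A"])
  then show ?thesis using has_adjoint_unique assms by blast
qed

lemma has_adjoint_adj:
  assumes A: "cblinear (A :: 'a::chilbert \<Rightarrow> 'a)"
  shows "has_adjoint A (adj A)"
proof -
  interpret A: bounded_linear A using A unfolding cblinear_def by blast
  have "\<exists>z. \<forall>x. inner (A x) y = inner x z" for y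
    using riesz_representation[OF bounded_linear_inner_left_comp[OF A.bounded_linear_axioms]]
    by metis
  then obtain B where B: "\<And>x y. inner (A x) y = inner x (B y)" by metis
  have B_eqI: "u = v" if "\<And>x. inner x u = inner x v" for u v :: 'a
    by (metis that inner_diff_right inner_eq_zero_iff right_minus_eq)
  have B_add: "B (y + z) = B y + B z" for y z
    by (rule B_eqI) (simp add: B[symmetric] inner_add_right)
  have B_scaleR: "B (r *\<^sub>R y) = r *\<^sub>R B y" for r y
    by (rule B_eqI) (simp add: B[symmetric])
  have B_cscale: "B (cscale c y) = cscale c (B y)" for c y
    by (rule B_eqI) (simp add: B[symmetric] inner_cscale_right cblinear_cscale_commute[OF A])
  obtain C where "C > 0" and C: "\<And>x. norm (A x) \<le> norm x * C" using A.pos_bounded by blast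
  have B_bounded: "norm (B y) \<le> norm y * C" for y
  proof -
    have "norm (B y) ^ 2 = inner (A (B y)) y" by (simp add: B power2_norm_eq_inner)
    also have "\<dots> \<le> norm (B y) * C * norm y"
      using norm_cauchy_schwarz[of "A (B y)" y] C[of "B y"]
      by (meson mult_right_mono norm_ge_zero order_trans)
    finally show ?thesis
      using \<open>C > 0\<close> by (cases "B y = 0") (auto simp: power2_eq_square algebra_simps)
  qed
  have "cblinear B"
    unfolding cblinear_def
    using bounded_linear_intro[of B C] B_add B_scaleR B_bounded B_cscale by blast
  moreover have "cinner (A x) y = cinner x (B y)" for x y
    by (simp add: cinner_def B cblinear_cscale_commute[OF A, symmetric])
  ultimately have "has_adjoint A B" unfolding has_adjoint_def by blast
  then show ?thesis using adj_eqI by metis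
qed

lemma has_adjoint_sym: "has_adjoint A B \<Longrightarrow> cblinear A \<Longrightarrow> has_adjoint B A"
  unfolding has_adjoint_def by (metis cinner_commute)

lemma has_adjoint_add:
  "has_adjoint A A' \<Longrightarrow> has_adjoint B B' \<Longrightarrow> has_adjoint (\<lambda>v. A v + B v) (\<lambda>v. A' v + B' v)"
  unfolding has_adjoint_def by (simp add: cblinear_add cinner_add_left cinner_add_right)

lemma has_adjoint_cscale:
  "has_adjoint A A' \<Longrightarrow> has_adjoint (\<lambda>v. cscale c (A v)) (\<lambda>v. cscale (cnj c) (A' v))"
  unfolding has_adjoint_def by (simp add: cblinear_cscale cinner_cscale_left cinner_cscale_right)

lemma has_adjoint_id: "has_adjoint (\<lambda>v. v) (\<lambda>v. v)"
  unfolding has_adjoint_def by (simp add: cblinear_id)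

lemma has_adjoint_zero: "has_adjoint (\<lambda>v. 0) (\<lambda>v. 0)"
  unfolding has_adjoint_def by (simp add: cblinear_zero complex_eq_iff cinner_def)

lemma commutantI:
  "cblinear X \<Longrightarrow> (\<And>A v. A \<in> S \<Longrightarrow> A (X v) = X (A v)) \<Longrightarrow> X \<in> commutant S"
  unfolding commutant_def by (auto simp: fun_eq_iff)

lemma commutant_cblinear: "X \<in> commutant S \<Longrightarrow> cblinear X"
  unfolding commutant_def by blast

lemma commutant_commute: "X \<in> commutant S \<Longrightarrow> A \<in> S \<Longrightarrow> X (A v) = A (X v)"
  unfolding commutant_def by (metis (mono_tags, lifting) comp_apply mem_Collect_eq)

lemma commutant_subset_bicommutant:
  assumes "\<And>A. A \<in> S \<Longrightarrow> cblinear A"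
  shows "S \<subseteq> commutant (commutant S)"
proof
  fix A assume "A \<in> S"
  show "A \<in> commutant (commutant S)"
    by (rule commutantI) (use assms \<open>A \<in> S\<close> commutant_commute in auto)
qed

lemma commutant_antimono: "S \<subseteq> T \<Longrightarrow> commutant T \<subseteq> commutant S"
  unfolding commutant_def by blast

lemma commutant_commutant_commutant:
  assumes "\<And>A. A \<in> S \<Longrightarrow> cblinear A"
  shows "commutant (commutant (commutant S)) = commutant S"
proof
  show "commutant (commutant (commutant S)) \<subseteq> commutant S"
    by (rule commutant_antimono[OF commutant_subset_bicommutant[OF assms]])
  show "commutant S \<subseteq> commutant (commutant (commutant S))"
    by (rule commutant_subset_bicommutant) (rule commutant_cblinear)
qed

lemma commutant_Wstar: "cblinear T \<Longrightarrow> commutant (Wstar T) = commutant {T, adj T}"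
  unfolding Wstar_def using has_adjoint_adj[of T]
  by (intro commutant_commutant_commutant) (auto simp: has_adjoint_def)

lemma von_neumann_algebra_cblinear: "von_neumann_algebra N \<Longrightarrow> A \<in> N \<Longrightarrow> cblinear A"
  unfolding von_neumann_algebra_def by blast

lemma von_neumann_algebra_adj: "von_neumann_algebra N \<Longrightarrow> A \<in> N \<Longrightarrow> adj A \<in> N"
  unfolding von_neumann_algebra_def by blast

lemma von_neumann_algebra_memI:
  assumes "von_neumann_algebra N" "cblinear A" "\<And>X v. X \<in> commutant N \<Longrightarrow> X (A v) = A (X v)"
  shows "A \<in> N"
proof -
  have "A \<in> commutant (commutant N)" using assms(2,3) by (rule commutantI)
  then show ?thesis using assms(1) unfolding von_neumann_algebra_def by simp
qed

lemma von_neumann_algebra_add: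
  assumes "von_neumann_algebra N" "A \<in> N" "B \<in> N"
  shows "(\<lambda>v. A v + B v) \<in> N"
proof (rule von_neumann_algebra_memI[OF assms(1)])
  show "cblinear (\<lambda>v. A v + B v)"
    using assms by (simp add: cblinear_add von_neumann_algebra_cblinear)
  show "X (A v + B v) = A (X v) + B (X v)" if "X \<in> commutant N" for X v
    using that assms(2,3) by (simp add: linear_add[OF cblinear_linear[OF commutant_cblinear]]
        commutant_commute)
qed

lemma von_neumann_algebra_cscale:
  assumes "von_neumann_algebra N" "A \<in> N"
  shows "(\<lambda>v. cscale c (A v)) \<in> N"
proof (rule von_neumann_algebra_memI[OF assms(1)])
  show "cblinear (\<lambda>v. cscale c (A v))"
    using assms by (simp add: cblinear_cscale von_neumann_algebra_cblinear)
  show "X (cscale c (A v)) = cscale c (A (X v))" if "X \<in> commutant N" for X v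
    using that assms(2)
    by (simp add: cblinear_cscale_commute[OF commutant_cblinear] commutant_commute)
qed

lemma von_neumann_algebra_id: "von_neumann_algebra N \<Longrightarrow> (\<lambda>v. v) \<in> N"
  by (rule von_neumann_algebra_memI) (auto simp: cblinear_id)

lemma von_neumann_algebra_zero: "von_neumann_algebra N \<Longrightarrow> (\<lambda>v. 0) \<in> N"
  by (rule von_neumann_algebra_memI)
    (auto simp: cblinear_zero linear_0[OF cblinear_linear] dest: commutant_cblinear)

section \<open>Cartesian decomposition\<close>

lemma cartesian_parts:
  fixes s t :: "'a::chilbert"
  defines "h \<equiv> cscale (1/2) s + cscale (1/2) t" and "k \<equiv> cscale (- \<i>/2) s + cscale (\<i>/2) t"
  shows "h + cscale \<i> k = s" and "h + cscale (- \<i>) k = t"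
proof -
  have "h + cscale \<i> k
      = (cscale (1/2) s + cscale (\<i> * (- \<i>/2)) s) + (cscale (1/2) t + cscale (\<i> * (\<i>/2)) t)"
    unfolding h_def k_def by (simp only: cscale_add_right cscale_mult add_ac)
  also have "\<dots> = s"
    by (simp only: cscale_add_left[symmetric]) simp
  finally show "h + cscale \<i> k = s" .
  have "h + cscale (- \<i>) k
      = (cscale (1/2) s + cscale (- \<i> * (- \<i>/2)) s) + (cscale (1/2) t + cscale (- \<i> * (\<i>/2)) t)"
    unfolding h_def k_def by (simp only: cscale_add_right cscale_mult add_ac)
  also have "\<dots> = t"
    by (simp only: cscale_add_left[symmetric]) simp
  finally show "h + cscale (- \<i>) k = t" .
qed

lemma cartesian_parts_eq:
  fixes u1 u2 w1 w2 :: "'a::chilbert"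
  assumes "u1 + cscale \<i> w1 = u2 + cscale \<i> w2" "u1 + cscale (- \<i>) w1 = u2 + cscale (- \<i>) w2"
  shows "u1 = u2" "w1 = w2"
proof -
  have "u1 - u2 = cscale \<i> w2 - cscale \<i> w1"
    using assms(1) by (simp add: algebra_simps)
  moreover have "u1 - u2 = cscale \<i> w1 - cscale \<i> w2"
    using assms(2) by (simp add: cscale_minus_left algebra_simps)
  ultimately have "(2::real) *\<^sub>R (cscale \<i> w1 - cscale \<i> w2) = 0"
    by (simp add: scaleR_2 algebra_simps)
  then have "cscale \<i> w1 = cscale \<i> w2" by simp
  then show "w1 = w2" by (metis cscale_ii_ii minus_equation_iff)
  then show "u1 = u2" using assms(1) by simp
qed

lemma commutant_cartesian:
  "commutant {\<lambda>v. A v + cscale \<i> (B v), \<lambda>v. A v + cscale (- \<i>) (B v)} = commutant {A, B}"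
proof (intro equalityI subsetI)
  fix X assume X: "X \<in> commutant {\<lambda>v. A v + cscale \<i> (B v), \<lambda>v. A v + cscale (- \<i>) (B v)}"
  have "X (A v) = A (X v) \<and> X (B v) = B (X v)" for v
    using cartesian_parts_eq[of "X (A v)" "X (B v)" "A (X v)" "B (X v)"]
      commutant_commute[OF X, of "\<lambda>v. A v + cscale \<i> (B v)" v]
      commutant_commute[OF X, of "\<lambda>v. A v + cscale (- \<i>) (B v)" v]
    by (simp add: linear_add[OF cblinear_linear[OF commutant_cblinear[OF X]]]
        cblinear_cscale_commute[OF commutant_cblinear[OF X]])
  then show "X \<in> commutant {A, B}"
    by (intro commutantI commutant_cblinear[OF X]) auto
next
  fix X assume X: "X \<in> commutant {A, B}"
  have "A (X v) = X (A v)" "B (X v) = X (B v)" for v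
    using commutant_commute[OF X] by auto
  then show "X \<in> commutant {\<lambda>v. A v + cscale \<i> (B v), \<lambda>v. A v + cscale (- \<i>) (B v)}"
    by (intro commutantI commutant_cblinear[OF X])
      (auto simp: linear_add[OF cblinear_linear[OF commutant_cblinear[OF X]]]
        cblinear_cscale_commute[OF commutant_cblinear[OF X]])
qed

lemma cartesian_decomposition:
  assumes N: "von_neumann_algebra N" and "S \<in> N"
  obtains H K where "H \<in> N" "K \<in> N" "has_adjoint H H" "has_adjoint K K"
    "S = (\<lambda>v. H v + cscale \<i> (K v))" "adj S = (\<lambda>v. H v + cscale (- \<i>) (K v))"
proof
  define S' where "S' = adj S"
  have S'N: "S' \<in> N" unfolding S'_def using N \<open>S \<in> N\<close> by (rule von_neumann_algebra_adj)
  have adj_S: "has_adjoint S S'"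
    unfolding S'_def using N \<open>S \<in> N\<close> by (intro has_adjoint_adj von_neumann_algebra_cblinear)
  have adj_S': "has_adjoint S' S"
    using has_adjoint_sym[OF adj_S von_neumann_algebra_cblinear[OF N \<open>S \<in> N\<close>]] .
  define H where "H = (\<lambda>v. cscale (1/2) (S v) + cscale (1/2) (S' v))"
  define K where "K = (\<lambda>v. cscale (- \<i>/2) (S v) + cscale (\<i>/2) (S' v))"
  show "H \<in> N" "K \<in> N"
    unfolding H_def K_def using N \<open>S \<in> N\<close> S'N
    by (simp_all add: von_neumann_algebra_add von_neumann_algebra_cscale)
  have "has_adjoint H (\<lambda>v. cscale (cnj (1/2)) (S' v) + cscale (cnj (1/2)) (S v))"
    unfolding H_def by (intro has_adjoint_add has_adjoint_cscale adj_S adj_S')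
  then show "has_adjoint H H" by (simp add: H_def add.commute)
  have "has_adjoint K (\<lambda>v. cscale (cnj (- \<i>/2)) (S' v) + cscale (cnj (\<i>/2)) (S v))"
    unfolding K_def by (intro has_adjoint_add has_adjoint_cscale adj_S adj_S')
  then show "has_adjoint K K" by (simp add: K_def add.commute)
  show "S = (\<lambda>v. H v + cscale \<i> (K v))"
    unfolding H_def K_def by (simp only: cartesian_parts)
  show "adj S = (\<lambda>v. H v + cscale (- \<i>) (K v))"
    unfolding H_def K_def S'_def by (simp only: cartesian_parts)
qed

lemma irreducible_cartesian_parts:
  assumes N: "von_neumann_algebra N" and "irreducible_in N S"
  obtains H K where "H \<in> N" "K \<in> N" "has_adjoint H H" "has_adjoint K K"
    "commutant {H, K} \<inter> N = center N"
proof -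
  have "S \<in> N" and S_irreducible: "commutant (Wstar S) \<inter> N = center N"
    using \<open>irreducible_in N S\<close> unfolding irreducible_in_def by auto
  obtain H K where HK: "H \<in> N" "K \<in> N" "has_adjoint H H" "has_adjoint K K"
    and S_eq: "S = (\<lambda>v. H v + cscale \<i> (K v))"
    and adj_S_eq: "adj S = (\<lambda>v. H v + cscale (- \<i>) (K v))"
    using cartesian_decomposition[OF N \<open>S \<in> N\<close>] by blast
  have "commutant (Wstar S) = commutant {S, adj S}"
    using N \<open>S \<in> N\<close> by (intro commutant_Wstar von_neumann_algebra_cblinear)
  also have "\<dots> = commutant {H, K}"
    unfolding adj_S_eq by (subst S_eq) (rule commutant_cartesian)
  finally show ?thesis using that HK S_irreducible by simp
qed

lemma op_matrix_nth: "op_matrix A x $ i = (\<Sum>j\<in>UNIV. A i j (x $ j))"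
  by (simp add: op_matrix_def)

lemma sum_eq_single:
  fixes f :: "'n::finite \<Rightarrow> 'b::comm_monoid_add"
  assumes "\<And>k. k \<noteq> j \<Longrightarrow> f k = 0"
  shows "sum f UNIV = f j"
  using assms by (subst sum.remove[of _ j]) (auto intro: sum.neutral)

lemma bounded_linear_vec_lambda:
  assumes "\<And>i. bounded_linear (f i)"
  shows "bounded_linear (\<lambda>x. (\<chi> i. f i x) :: 'b::real_normed_vector ^ 'n)"
proof -
  obtain K where K: "\<And>i x. norm (f i x) \<le> norm x * K i"
    using bounded_linear.bounded[OF assms] by metis
  show ?thesis
  proof (rule bounded_linear_intro[where K="\<Sum>i\<in>UNIV. K i"])
    show "(\<chi> i. f i (x + y)) = (\<chi> i. f i x) + (\<chi> i. f i y)" for x y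
      by (simp add: vec_eq_iff linear_add[OF bounded_linear.linear[OF assms]])
    show "(\<chi> i. f i (r *\<^sub>R x)) = r *\<^sub>R (\<chi> i. f i x)" for r x
      by (simp add: vec_eq_iff linear_scale[OF bounded_linear.linear[OF assms]])
    have "norm (\<chi> i. f i x) \<le> (\<Sum>i\<in>UNIV. norm (f i x))" for x
      unfolding norm_vec_def using L2_set_le_sum[of UNIV "\<lambda>i. norm (f i x)"] by simp
    also have "\<dots> x \<le> (\<Sum>i\<in>UNIV. norm x * K i)" for x by (rule sum_mono) (rule K)
    finally show "norm (\<chi> i. f i x) \<le> norm x * (\<Sum>i\<in>UNIV. K i)" for x
      by (simp add: sum_distrib_left)
  qed
qed

lemma cblinear_op_matrix:
  assumes "\<And>i j. cblinear (A i j)"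
  shows "cblinear (op_matrix A)"
  unfolding cblinear_def
proof (intro conjI allI)
  show "bounded_linear (op_matrix A)"
    unfolding op_matrix_def
    using assms unfolding cblinear_def
    by (intro bounded_linear_vec_lambda bounded_linear_sum
        bounded_linear_compose[OF _ bounded_linear_vec_nth]) auto
  show "op_matrix A (cscale c x) = cscale c (op_matrix A x)" for c x
    by (simp add: vec_eq_iff op_matrix_nth cscale_vec_def cblinear_cscale_commute[OF assms]
        cscale_sum)
qed

lemma has_adjoint_op_matrix:
  assumes "\<And>i j. has_adjoint (A i j) (A' j i)"
  shows "has_adjoint (op_matrix A) (op_matrix A')"
  unfolding has_adjoint_def
proof (intro conjI allI)
  show "cblinear (op_matrix A')"
    by (rule cblinear_op_matrix) (metis assms has_adjoint_def)
  fix x y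
  have "cinner (op_matrix A x) y = (\<Sum>i\<in>UNIV. \<Sum>j\<in>UNIV. cinner (A i j (x $ j)) (y $ i))"
    by (simp add: cinner_vec op_matrix_nth cinner_sum_left)
  also have "\<dots> = (\<Sum>i\<in>UNIV. \<Sum>j\<in>UNIV. cinner (x $ j) (A' j i (y $ i)))"
    using assms by (simp add: has_adjoint_def)
  also have "\<dots> = cinner x (op_matrix A' y)"
    by (subst sum.swap) (simp add: cinner_vec op_matrix_nth cinner_sum_right)
  finally show "cinner (op_matrix A x) y = cinner x (op_matrix A' y)" .
qed

lemma op_matrix_commute_entries:
  assumes "\<And>i j. cblinear (A i j)" "\<And>i j. cblinear (C i j)"
    and "\<And>x. op_matrix A (op_matrix C x) = op_matrix C (op_matrix A x)"
  shows "(\<Sum>k\<in>UNIV. A i k (C k j v)) = (\<Sum>k\<in>UNIV. C i k (A k j v))"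
  using arg_cong[OF assms(3)[of "\<chi> k. if k = j then v else 0"], of "\<lambda>x. x $ i"]
  by (simp add: op_matrix_nth if_distrib[of "A _ _"] if_distrib[of "C _ _"]
      linear_0[OF cblinear_linear[OF assms(1)]] linear_0[OF cblinear_linear[OF assms(2)]]
      cong: if_cong)

lemma diagonal_op_matrix_in_commutant:
  assumes "p \<in> commutant N"
  shows "op_matrix (\<lambda>i j. if i = j then p else (\<lambda>_. 0)) \<in> commutant (matrix_tensor N)"
proof (rule commutantI)
  have "cblinear p" using assms by (rule commutant_cblinear)
  then show "cblinear (op_matrix (\<lambda>i j. if i = j then p else (\<lambda>_. 0)))"
    by (intro cblinear_op_matrix) (simp add: cblinear_zero)
  have diag: "op_matrix (\<lambda>i j. if i = j then p else (\<lambda>_. 0)) x = (\<chi> j. p (x $ j))" for x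
    by (simp add: vec_eq_iff op_matrix_nth if_distrib[of "\<lambda>f. f _"] cong: if_cong)
  fix A x assume "A \<in> matrix_tensor N"
  then obtain Am where Am: "\<And>i j. Am i j \<in> N" and A: "A = op_matrix Am"
    unfolding matrix_tensor_def by blast
  show "A (op_matrix (\<lambda>i j. if i = j then p else (\<lambda>_. 0)) x)
      = op_matrix (\<lambda>i j. if i = j then p else (\<lambda>_. 0)) (A x)"
    by (simp add: diag A vec_eq_iff op_matrix_nth commutant_commute[OF assms Am]
        linear_sum[OF cblinear_linear[OF \<open>cblinear p\<close>]])
qed

section \<open>The corner projection and the arrowhead matrix\<close>

definition corner_entries :: "'n \<Rightarrow> 'n \<Rightarrow> 'n \<Rightarrow> 'a::chilbert \<Rightarrow> 'a" where
  "corner_entries a i j v = (if i = a \<and> j = a then v else 0)"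

definition arrowhead_entries ::
    "'n \<Rightarrow> 'n \<Rightarrow> ('n \<Rightarrow> real) \<Rightarrow> ('a::chilbert \<Rightarrow> 'a) \<Rightarrow> ('a \<Rightarrow> 'a) \<Rightarrow> 'n \<Rightarrow> 'n \<Rightarrow> 'a \<Rightarrow> 'a" where
  "arrowhead_entries a b d H K i j v =
     (if i = j then (if i = a then H v else if i = b then K v else d i *\<^sub>R v)
      else if i = b \<or> j = b then v else 0)"

lemma corner_entries_eq: "corner_entries a i j = (if i = a \<and> j = a then (\<lambda>v. v) else (\<lambda>_. 0))"
  by (auto simp: fun_eq_iff corner_entries_def)

lemma arrowhead_entries_eq:
  "arrowhead_entries a b d H K i j =
     (if i = j then (if i = a then H else if i = b then K else (\<lambda>v. cscale (complex_of_real (d i)) v))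
      else if i = b \<or> j = b then (\<lambda>v. v) else (\<lambda>_. 0))"
  by (simp add: fun_eq_iff arrowhead_entries_def cscale_of_real)

lemma corner_entries_mem: "von_neumann_algebra N \<Longrightarrow> corner_entries a i j \<in> N"
  by (simp add: corner_entries_eq von_neumann_algebra_id von_neumann_algebra_zero)

lemma arrowhead_entries_mem:
  "von_neumann_algebra N \<Longrightarrow> H \<in> N \<Longrightarrow> K \<in> N \<Longrightarrow> arrowhead_entries a b d H K i j \<in> N"
  by (simp add: arrowhead_entries_eq von_neumann_algebra_id von_neumann_algebra_zero
      von_neumann_algebra_cscale)

lemma cblinear_corner_entries: "cblinear (corner_entries a i j)"
  by (simp add: corner_entries_eq cblinear_id cblinear_zero)

lemma cblinear_arrowhead_entries:
  "cblinear H \<Longrightarrow> cblinear K \<Longrightarrow> cblinear (arrowhead_entries a b d H K i j)"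
  by (simp add: arrowhead_entries_eq cblinear_id cblinear_zero cblinear_cscale)

lemma has_adjoint_corner:
  "has_adjoint (op_matrix (corner_entries a)) (op_matrix (corner_entries a))"
  by (intro has_adjoint_op_matrix) (auto simp: corner_entries_eq has_adjoint_id has_adjoint_zero)

lemma has_adjoint_arrowhead:
  assumes "has_adjoint H H" "has_adjoint K K"
  shows "has_adjoint (op_matrix (arrowhead_entries a b d H K))
                     (op_matrix (arrowhead_entries a b d H K))"
proof (intro has_adjoint_op_matrix)
  have "has_adjoint (\<lambda>v. cscale (complex_of_real r) v) (\<lambda>v. cscale (complex_of_real r) v)" for r
    using has_adjoint_cscale[OF has_adjoint_id, of "complex_of_real r"] by simp
  then show "has_adjoint (arrowhead_entries a b d H K i j) (arrowhead_entries a b d H K j i)"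
    for i j using assms by (auto simp: arrowhead_entries_eq has_adjoint_id has_adjoint_zero)
qed

lemma is_projection_corner: "is_projection (op_matrix (corner_entries a))"
  unfolding is_projection_def
proof (intro conjI)
  show "cblinear (op_matrix (corner_entries a))"
    by (intro cblinear_op_matrix cblinear_corner_entries)
  have corner_nth: "op_matrix (corner_entries a) x $ i = (if i = a then x $ a else 0)" for x i
    by (simp add: op_matrix_nth corner_entries_def)
  show "op_matrix (corner_entries a) \<circ> op_matrix (corner_entries a) = op_matrix (corner_entries a)"
    by (simp add: fun_eq_iff vec_eq_iff corner_nth)
  show "adj (op_matrix (corner_entries a)) = op_matrix (corner_entries a)"
    by (rule adj_eqI[OF has_adjoint_corner])
qed

lemma self_adjoint_arrowhead:
  assumes "has_adjoint H H" "has_adjoint K K"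
  shows "self_adjoint (op_matrix (arrowhead_entries a b d H K))"
  using has_adjoint_arrowhead[OF assms] adj_eqI
  unfolding self_adjoint_def has_adjoint_def by blast

section \<open>Commutation with the corner projection and the arrowhead matrix\<close>

context
  fixes X :: "'n::finite \<Rightarrow> 'n \<Rightarrow> 'a::chilbert \<Rightarrow> 'a"
    and a b :: 'n and d :: "'n \<Rightarrow> real" and H K :: "'a \<Rightarrow> 'a"
  assumes X: "\<And>i j. cblinear (X i j)" and H: "cblinear H" and K: "cblinear K"
    and "a \<noteq> b" and "inj d"
    and commute_corner: "\<And>x. op_matrix X (op_matrix (corner_entries a) x)
                              = op_matrix (corner_entries a) (op_matrix X x)"
    and commute_arrowhead: "\<And>x. op_matrix X (op_matrix (arrowhead_entries a b d H K) x)
                                 = op_matrix (arrowhead_entries a b d H K) (op_matrix X x)"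
begin

private lemma corner_sums:
  "(\<Sum>k\<in>UNIV. X i k (corner_entries a k j v)) = (\<Sum>k\<in>UNIV. corner_entries a i k (X k j v))"
  by (rule op_matrix_commute_entries[OF X cblinear_corner_entries commute_corner])

private lemma arrowhead_sums:
  "(\<Sum>k\<in>UNIV. X i k (arrowhead_entries a b d H K k j v))
    = (\<Sum>k\<in>UNIV. arrowhead_entries a b d H K i k (X k j v))"
  by (rule op_matrix_commute_entries[OF X cblinear_arrowhead_entries[OF H K] commute_arrowhead])

private lemmas X_zero = linear_0[OF cblinear_linear[OF X]]
  and X_scaleR = linear_scale[OF cblinear_linear[OF X]]
  and H_zero = linear_0[OF cblinear_linear[OF H]]
  and K_zero = linear_0[OF cblinear_linear[OF K]]

private lemma commuting_entry_column_a: "i \<noteq> a \<Longrightarrow> X i a v = 0"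
  using corner_sums[of i a v]
  by (simp add: sum_eq_single[where j=a] corner_entries_def X_zero)

private lemma commuting_entry_row_a: "j \<noteq> a \<Longrightarrow> X a j v = 0"
  using corner_sums[of a j v]
  by (simp add: sum_eq_single[where j=a] corner_entries_def X_zero)

private lemma commuting_entry_row_b:
  assumes "c \<noteq> a" "c \<noteq> b"
  shows "X b c v = 0"
proof -
  have "(\<Sum>k\<in>UNIV. X a k (arrowhead_entries a b d H K k c v)) = 0"
    using assms \<open>a \<noteq> b\<close> by (intro sum.neutral) (auto simp: arrowhead_entries_def X_zero
        commuting_entry_row_a)
  moreover have "(\<Sum>k\<in>UNIV. arrowhead_entries a b d H K a k (X k c v)) = X b c v"
    using assms \<open>a \<noteq> b\<close> by (subst sum_eq_single[where j=b])
      (auto simp: arrowhead_entries_def H_zero commuting_entry_row_a)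
  ultimately show ?thesis using arrowhead_sums[of a c v] by simp
qed

private lemma commuting_entry_column_b:
  assumes "c \<noteq> a" "c \<noteq> b"
  shows "X c b v = 0"
proof -
  have "(\<Sum>k\<in>UNIV. X c k (arrowhead_entries a b d H K k a v)) = X c b v"
    using assms \<open>a \<noteq> b\<close> by (subst sum_eq_single[where j=b])
      (auto simp: arrowhead_entries_def X_zero commuting_entry_column_a)
  moreover have "(\<Sum>k\<in>UNIV. arrowhead_entries a b d H K c k (X k a v)) = 0"
    using assms \<open>a \<noteq> b\<close> by (intro sum.neutral) (auto simp: arrowhead_entries_def
        commuting_entry_column_a)
  ultimately show ?thesis using arrowhead_sums[of c a v] by simp
qed

private lemma commuting_entry_scalar_block:
  assumes "c \<noteq> a" "c \<noteq> b" "c' \<noteq> a" "c' \<noteq> b" "c \<noteq> c'"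
  shows "X c c' v = 0"
proof -
  have "(\<Sum>k\<in>UNIV. X c k (arrowhead_entries a b d H K k c' v)) = d c' *\<^sub>R X c c' v"
    using assms by (subst sum_eq_single[where j=c'])
      (auto simp: arrowhead_entries_def X_zero X_scaleR commuting_entry_column_b)
  moreover have "(\<Sum>k\<in>UNIV. arrowhead_entries a b d H K c k (X k c' v)) = d c *\<^sub>R X c c' v"
    using assms by (subst sum_eq_single[where j=c])
      (auto simp: arrowhead_entries_def commuting_entry_row_b)
  moreover have "d c' \<noteq> d c" using \<open>inj d\<close> \<open>c \<noteq> c'\<close> by (metis injD)
  ultimately show ?thesis using arrowhead_sums[of c c' v] by (simp add: scaleR_cancel_right)
qed

lemma commuting_entry_offdiag: "i \<noteq> j \<Longrightarrow> X i j v = 0"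
  using \<open>a \<noteq> b\<close>
  by (cases "i = a"; cases "j = a"; cases "i = b"; cases "j = b")
    (auto simp: commuting_entry_row_a commuting_entry_column_a
      commuting_entry_row_b commuting_entry_column_b commuting_entry_scalar_block)

private lemma commuting_entry_arrowhead:
  "X i i (arrowhead_entries a b d H K i j v) = arrowhead_entries a b d H K i j (X j j v)"
proof -
  have "(\<Sum>k\<in>UNIV. X i k (arrowhead_entries a b d H K k j v))
      = X i i (arrowhead_entries a b d H K i j v)"
    by (subst sum_eq_single[where j=i]) (auto simp: commuting_entry_offdiag)
  moreover have "(\<Sum>k\<in>UNIV. arrowhead_entries a b d H K i k (X k j v))
      = arrowhead_entries a b d H K i j (X j j v)"
    by (subst sum_eq_single[where j=j])
      (auto simp: commuting_entry_offdiag arrowhead_entries_def H_zero K_zero)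
  ultimately show ?thesis using arrowhead_sums[of i j v] by simp
qed

lemma commuting_entry_diag: "X i i v = X a a v"
proof -
  have diag_b: "X b b v = X a a v"
    using commuting_entry_arrowhead[of a b v] \<open>a \<noteq> b\<close> by (simp add: arrowhead_entries_def)
  moreover have "X i i v = X b b v" if "i \<noteq> a" "i \<noteq> b"
    using commuting_entry_arrowhead[of i b v] that by (simp add: arrowhead_entries_def)
  ultimately show ?thesis by (cases "i = a \<or> i = b") auto
qed

lemma commuting_entry_commutes_H: "X a a (H v) = H (X a a v)"
  using commuting_entry_arrowhead[of a a v] by (simp add: arrowhead_entries_def)

lemma commuting_entry_commutes_K: "X a a (K v) = K (X a a v)"
  using commuting_entry_arrowhead[of b b v] \<open>a \<noteq> b\<close> commuting_entry_diag[of b]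
  by (simp add: arrowhead_entries_def)

end

lemma op_matrix_in_matrix_tensor: "(\<And>i j. A i j \<in> N) \<Longrightarrow> op_matrix A \<in> matrix_tensor N"
  unfolding matrix_tensor_def by blast

lemma matrix_tensor_add_cscale:
  assumes N: "von_neumann_algebra N" and "P \<in> matrix_tensor N" "B \<in> matrix_tensor N"
  shows "(\<lambda>x. P x + cscale c (B x)) \<in> matrix_tensor N"
proof -
  obtain Pm Bm where "\<And>i j. Pm i j \<in> N" "\<And>i j. Bm i j \<in> N" "P = op_matrix Pm" "B = op_matrix Bm"
    using assms(2,3) unfolding matrix_tensor_def by blast
  then have "(\<lambda>x. P x + cscale c (B x)) = op_matrix (\<lambda>i j v. Pm i j v + cscale c (Bm i j v))"
    by (simp add: fun_eq_iff vec_eq_iff op_matrix_nth cscale_vec_def sum.distrib cscale_sum)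
  also have "\<dots> \<in> matrix_tensor N"
    using N \<open>\<And>i j. Pm i j \<in> N\<close> \<open>\<And>i j. Bm i j \<in> N\<close>
    by (intro op_matrix_in_matrix_tensor von_neumann_algebra_add von_neumann_algebra_cscale)
  finally show ?thesis .
qed

lemma commutant_corner_arrowhead_subset_center:
  fixes N :: "('a::chilbert \<Rightarrow> 'a) set" and a b :: "'n::finite"
  assumes N: "von_neumann_algebra N" and "H \<in> N" "K \<in> N"
    and HK: "commutant {H, K} \<inter> N \<subseteq> center N" and "a \<noteq> b" "inj d"
  shows "commutant {op_matrix (corner_entries a), op_matrix (arrowhead_entries a b d H K)}
           \<inter> matrix_tensor N \<subseteq> center (matrix_tensor N)"
proof
  fix Y
  assume Y: "Y \<in> commutant {op_matrix (corner_entries a), op_matrix (arrowhead_entries a b d H K)}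
               \<inter> matrix_tensor N"
  then obtain X where XN: "\<And>i j. X i j \<in> N" and Y_eq: "Y = op_matrix X"
    unfolding matrix_tensor_def by blast
  have X: "cblinear (X i j)" for i j using N XN by (rule von_neumann_algebra_cblinear)
  have H: "cblinear H" and K: "cblinear K"
    using N \<open>H \<in> N\<close> \<open>K \<in> N\<close> by (auto intro: von_neumann_algebra_cblinear)
  note commute = commutant_commute[OF Y[THEN IntD1, unfolded Y_eq]]
  have commute_corner:
    "op_matrix X (op_matrix (corner_entries a) x) = op_matrix (corner_entries a) (op_matrix X x)"
    for x by (rule commute) simp
  have commute_arrowhead: "op_matrix X (op_matrix (arrowhead_entries a b d H K) x)
      = op_matrix (arrowhead_entries a b d H K) (op_matrix X x)"
    for x by (rule commute) simp
  note commuting = X H K \<open>a \<noteq> b\<close> \<open>inj d\<close> commute_corner commute_arrowhead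
  define p where "p = X a a"
  have "p \<in> commutant {H, K}"
    using commuting_entry_commutes_H[OF commuting] commuting_entry_commutes_K[OF commuting]
    unfolding p_def by (intro commutantI X) auto
  then have "p \<in> commutant N" using HK XN unfolding center_def p_def by blast
  moreover have "Y = op_matrix (\<lambda>i j. if i = j then p else (\<lambda>_. 0))"
  proof -
    have "X i j v = (if i = j then p else (\<lambda>_. 0)) v" for i j v
      using commuting_entry_offdiag[OF commuting, of i j v]
        commuting_entry_diag[OF commuting, of i v]
      unfolding p_def by (cases "i = j") simp_all
    then show ?thesis unfolding Y_eq by (intro arg_cong[where f=op_matrix] ext)
  qed
  ultimately have "Y \<in> commutant (matrix_tensor N)"
    using diagonal_op_matrix_in_commutant by simp
  then show "Y \<in> center (matrix_tensor N)" using Y unfolding center_def by blast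
qed

lemma irreducible_corner_plus_arrowhead:
  fixes N :: "('a::chilbert \<Rightarrow> 'a) set" and a b :: "'n::finite"
  assumes N: "von_neumann_algebra N" and "H \<in> N" "K \<in> N"
    and "has_adjoint H H" "has_adjoint K K"
    and HK_center: "commutant {H, K} \<inter> N \<subseteq> center N" and "a \<noteq> b" "inj d"
  shows "irreducible_in (matrix_tensor N) (\<lambda>x. op_matrix (corner_entries a) x
           + cscale \<i> (op_matrix (arrowhead_entries a b d H K) x))"
proof -
  define P where "P = op_matrix (corner_entries a :: _ \<Rightarrow> _ \<Rightarrow> 'a \<Rightarrow> 'a)"
  define B where "B = op_matrix (arrowhead_entries a b d H K)"
  let ?M = "matrix_tensor N :: ('a ^ 'n \<Rightarrow> 'a ^ 'n) set"
  have "P \<in> ?M" "B \<in> ?M"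
    unfolding P_def B_def using N \<open>H \<in> N\<close> \<open>K \<in> N\<close>
    by (auto intro!: op_matrix_in_matrix_tensor corner_entries_mem arrowhead_entries_mem)
  have adj_P: "has_adjoint P P" and adj_B: "has_adjoint B B"
    unfolding P_def B_def using \<open>has_adjoint H H\<close> \<open>has_adjoint K K\<close>
    by (auto intro: has_adjoint_corner has_adjoint_arrowhead)
  then have "cblinear P" "cblinear B" by (auto simp: has_adjoint_def)
  have "adj (\<lambda>x. P x + cscale \<i> (B x)) = (\<lambda>x. P x + cscale (- \<i>) (B x))"
    using has_adjoint_add[OF adj_P has_adjoint_cscale[OF adj_B, of \<i>]] by (simp add: adj_eqI)
  then have "commutant (Wstar (\<lambda>x. P x + cscale \<i> (B x))) = commutant {P, B}"
    using \<open>cblinear P\<close> \<open>cblinear B\<close>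
    by (simp add: commutant_Wstar cblinear_add cblinear_cscale commutant_cartesian)
  moreover have "commutant {P, B} \<inter> ?M \<subseteq> center ?M"
    unfolding P_def B_def
    using commutant_corner_arrowhead_subset_center[OF N \<open>H \<in> N\<close> \<open>K \<in> N\<close> HK_center
        \<open>a \<noteq> b\<close> \<open>inj d\<close>] .
  moreover have "center ?M \<subseteq> commutant {P, B}"
    using \<open>P \<in> ?M\<close> \<open>B \<in> ?M\<close> commutant_antimono[of "{P, B}" ?M] unfolding center_def by blast
  ultimately show ?thesis
    unfolding irreducible_in_def P_def[symmetric] B_def[symmetric] center_def
    using matrix_tensor_add_cscale[OF N \<open>P \<in> ?M\<close> \<open>B \<in> ?M\<close>] by blast
qed

theorem mainTheorem8:
  fixes N :: "('a::chilbert \<Rightarrow> 'a) set"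
  assumes "von_neumann_algebra N"
    and "CARD('n::finite) \<ge> 2"
    and "\<exists>T. irreducible_in N T"
  shows "\<exists>P B. P \<in> (matrix_tensor N :: ('a ^ 'n \<Rightarrow> 'a ^ 'n) set)
           \<and> B \<in> (matrix_tensor N :: ('a ^ 'n \<Rightarrow> 'a ^ 'n) set)
           \<and> is_projection P \<and> self_adjoint B
           \<and> irreducible_in (matrix_tensor N) (\<lambda>x. P x + cscale \<i> (B x))"
proof -
  obtain S where "irreducible_in N S" using assms(3) by blast
  then obtain H K where HK: "H \<in> N" "K \<in> N" "has_adjoint H H" "has_adjoint K K"
    and HK_center: "commutant {H, K} \<inter> N = center N"
    using irreducible_cartesian_parts[OF assms(1)] by blast
  obtain a b :: 'n where "a \<noteq> b"
    using assms(2) card_le_Suc0_iff_eq[of "UNIV :: 'n set"] by fastforce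
  obtain d :: "'n \<Rightarrow> nat" where "inj d"
    using finite_imp_inj_to_nat_seg[of "UNIV :: 'n set"] by auto
  then have "inj (real \<circ> d)" by (simp add: inj_on_def)
  have "op_matrix (corner_entries a) \<in> (matrix_tensor N :: ('a ^ 'n \<Rightarrow> 'a ^ 'n) set)"
    "op_matrix (arrowhead_entries a b (real \<circ> d) H K) \<in> (matrix_tensor N :: ('a ^ 'n \<Rightarrow> 'a ^ 'n) set)"
    using assms(1) HK
    by (auto intro!: op_matrix_in_matrix_tensor corner_entries_mem arrowhead_entries_mem)
  then show ?thesis
    using is_projection_corner self_adjoint_arrowhead[OF HK(3,4)]
      irreducible_corner_plus_arrowhead[OF assms(1) HK equalityD1[OF HK_center]
        \<open>a \<noteq> b\<close> \<open>inj (real \<circ> d)\<close>]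
    by blast
qed

end
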